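(* For every reduced fraction $t\in(0,\infty)\cap\mathbb Q$, one has $\overline{\omega}_t=xyz\,\omega_t^{-1}$.
   Context: Modified lattice: the planar graph with vertex set $\mathbb Z^2$ whose edges are the horizontal unit segments, the vertical unit segments, and the diagonal segments of slope $-1$ joining $(i,j+1)$ and $(i+1,j)$. Words $\omega_t$: for reduced $t=p/q\in(0,\infty)$, let $L_t$ be the segment from $(0,0)$ to $(q,p)$, oriented from $(0,0)$ to $(q,p)$. List the edges whose relative interior meets $L_t$, in the order of the intersection points along $L_t$. A horizontal (resp. diagonal, vertical) edge contributes $x$ (resp. $y$, $z$) if its midpoint is not on the right-hand side of $L_t$ (including lying on $L_t$), and $x^{-1}$ (resp. $y^{-1}$, $z^{-1}$) if its midpoint is on the right-hand side. $\omega_t$ is the concatenation of these letters, viewed in the free group on $\{x,y,z\}$. Endpoint-completed word $\overline\omega_t$: choose $\varepsilon>0$ sufficiently small (so that the shifted segment has the same order of edge and triangle events away from the endpoints and passes through no lattice vertex and no edge midpoint), and let $\overline L_t$ be the segment from $(-\varepsilon,0)$ to $(q-\varepsilon,p)$, oriented from lower left to upper right. Read the edges crossed by $\overline L_t$ in order, with the half-open convention that the horizontal edge containing the initial endpoint $(-\varepsilon,0)$ is counted as crossed, while the edge containing the terminal endpoint is not counted. Assign letters by the same rule as for $\omega_t$ (horizontal/diagonal/vertical gives $x/y/z$ if the midpoint is not on the right-hand side of $\overline L_t$, and the inverse letter if it is). The resulting word is $\overline\omega_t$. *)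

theory Defs
  imports Complex_Main
begin

datatype gen = GX | GY | GZ

text \<open>A letter is a generator with a sign: True = the generator, False = its inverse.\<close>
type_synonym letter = "gen \<times> bool"
type_synonym word = "letter list"

definition inv_letter :: "letter \<Rightarrow> letter" where
  "inv_letter a = (fst a, \<not> snd a)"

definition word_inv :: "word \<Rightarrow> word" where
  "word_inv w = rev (map inv_letter w)"

inductive cancel1 :: "word \<Rightarrow> word \<Rightarrow> bool" where
  "cancel1 (u @ [a, inv_letter a] @ v) (u @ v)"

definition fg_eq :: "word \<Rightarrow> word \<Rightarrow> bool" where
  "fg_eq = equivclp cancel1"

text \<open>Edges: H i j joins (i,j),(i+1,j); V i j joins (i,j),(i,j+1);
  D i j joins (i,j+1),(i+1,j) (slope -1).\<close>
datatype edge = H int int | V int int | D int int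

fun edge_end1 :: "edge \<Rightarrow> real \<times> real" where
  "edge_end1 (H i j) = (of_int i, of_int j)"
| "edge_end1 (V i j) = (of_int i, of_int j)"
| "edge_end1 (D i j) = (of_int i, of_int j + 1)"

fun edge_end2 :: "edge \<Rightarrow> real \<times> real" where
  "edge_end2 (H i j) = (of_int i + 1, of_int j)"
| "edge_end2 (V i j) = (of_int i, of_int j + 1)"
| "edge_end2 (D i j) = (of_int i + 1, of_int j)"

fun edge_gen :: "edge \<Rightarrow> gen" where
  "edge_gen (H i j) = GX"
| "edge_gen (D i j) = GY"
| "edge_gen (V i j) = GZ"

definition midpoint2 :: "edge \<Rightarrow> real \<times> real" where
  "midpoint2 e = ((fst (edge_end1 e) + fst (edge_end2 e)) / 2,
                  (snd (edge_end1 e) + snd (edge_end2 e)) / 2)"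

definition seg_pt :: "real \<times> real \<Rightarrow> real \<times> real \<Rightarrow> real \<Rightarrow> real \<times> real" where
  "seg_pt A B s = (fst A + s * (fst B - fst A), snd A + s * (snd B - snd A))"

definition right_side :: "real \<times> real \<Rightarrow> real \<times> real \<Rightarrow> real \<times> real \<Rightarrow> bool" where
  "right_side A B M \<longleftrightarrow>
     (fst B - fst A) * (snd M - snd A) - (snd B - snd A) * (fst M - fst A) < 0"

definition meets_at :: "real set \<Rightarrow> real \<times> real \<Rightarrow> real \<times> real \<Rightarrow> edge \<Rightarrow> real \<Rightarrow> bool" where
  "meets_at S A B e s \<longleftrightarrow> s \<in> S \<and>
     (\<exists>u. 0 < u \<and> u < 1 \<and> seg_pt A B s = seg_pt (edge_end1 e) (edge_end2 e) u)"

definition crossed :: "real set \<Rightarrow> real \<times> real \<Rightarrow> real \<times> real \<Rightarrow> edge set" where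
  "crossed S A B = {e. \<exists>s. meets_at S A B e s}"

definition cross_param :: "real set \<Rightarrow> real \<times> real \<Rightarrow> real \<times> real \<Rightarrow> edge \<Rightarrow> real" where
  "cross_param S A B e = (THE s. meets_at S A B e s)"

definition edge_letter :: "real \<times> real \<Rightarrow> real \<times> real \<Rightarrow> edge \<Rightarrow> letter" where
  "edge_letter A B e = (edge_gen e, \<not> right_side A B (midpoint2 e))"

definition read_word :: "real set \<Rightarrow> real \<times> real \<Rightarrow> real \<times> real \<Rightarrow> word" where
  "read_word S A B =
     map (edge_letter A B) (sorted_key_list_of_set (cross_param S A B) (crossed S A B))"

definition omega :: "rat \<Rightarrow> word" where
  "omega t = (let (p, q) = quotient_of t in
     read_word {0..1} (0, 0) (of_int q, of_int p))"

text \<open>Shifted segment from (-eps,0) to (q-eps,p), half-open [0,1): the initial edge is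
  counted, the terminal one is not.\<close>
definition omega_bar_eps :: "rat \<Rightarrow> real \<Rightarrow> word" where
  "omega_bar_eps t \<epsilon> = (let (p, q) = quotient_of t in
     read_word {0..<1} (- \<epsilon>, 0) (of_int q - \<epsilon>, of_int p))"

end

theory Submission
  imports Defs
begin

(* Put h(x, y) = q y - p x. The segment L_t lies on the level h = 0, the shifted segment on
   the parallel level h = p eps, and the relative interior of an edge meets such a level iff
   the values of h at its two (lattice) endpoints lie strictly on either side of it. As these
   values are integers, for 0 < p eps < 1 the shifted segment crosses exactly the edges
   crossed by L_t together with the edges whose lower endpoint lies on L_t; by coprimality
   the only such lattice point in the half-open parameter range is the origin, giving the
   three edges read as x, y, z before all the others. The half-turn about the centre of L_t
   maps the edges crossed by L_t onto themselves, reverses their order and negates h at the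
   midpoints, so the remaining letters of the completed word are those of omega_t inverted
   and reversed. The identity thus holds literally, with no free cancellation. *)

context linorder
begin

lemma sorted_key_list_of_set_eqI:
  assumes "finite A" "inj_on f A" "sorted_wrt (<) (map f xs)" "set xs = A"
  shows "sorted_key_list_of_set f A = xs"
proof -
  interpret folding_insort_key "(\<le>)" "(<)" A f by unfold_locales (rule assms(2))
  have "distinct xs" using assms(3) by (simp add: strict_sorted_iff distinct_map)
  then have "length xs = card A" using assms(4) by (metis distinct_card)
  then show ?thesis using sorted_key_list_of_set_unique[of A xs] assms by simp
qed

lemma sorted_wrt_sorted_key_list_of_set:
  assumes "inj_on f A"
  shows "sorted_wrt (<) (map f (sorted_key_list_of_set f A))"
proof -
  interpret folding_insort_key "(\<le>)" "(<)" A f by unfold_locales (rule assms)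
  show ?thesis by simp
qed

lemma set_sorted_key_list_of_set_inj:
  assumes "finite A" "inj_on f A"
  shows "set (sorted_key_list_of_set f A) = A"
proof -
  interpret folding_insort_key "(\<le>)" "(<)" A f by unfold_locales (rule assms(2))
  show ?thesis using assms(1) by simp
qed

end

lemma rev_sorted_key_list_of_set:
  fixes f :: "'b \<Rightarrow> 'a::linorder"
  assumes "finite A" "inj_on f A" "g ` A = A"
    and reverses: "\<And>a b. a \<in> A \<Longrightarrow> b \<in> A \<Longrightarrow> f a < f b \<Longrightarrow> f (g b) < f (g a)"
  shows "rev (sorted_key_list_of_set f A) = map g (sorted_key_list_of_set f A)"
proof -
  define xs where "xs = sorted_key_list_of_set f A"
  have xs: "sorted_wrt (<) (map f xs)" "set xs = A"
    unfolding xs_def using assms(1,2)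
    by (simp_all add: sorted_wrt_sorted_key_list_of_set set_sorted_key_list_of_set_inj)
  have "sorted_wrt (\<lambda>a b. f (g b) < f (g a)) xs"
    using xs by (auto simp: sorted_wrt_map intro: sorted_wrt_mono_rel[of _ "\<lambda>a b. f a < f b"] reverses)
  then have "sorted_wrt (<) (map f (rev (map g xs)))"
    by (simp add: rev_map[symmetric] sorted_wrt_rev sorted_wrt_map)
  moreover have "set (rev (map g xs)) = A" using xs(2) assms(3) by simp
  ultimately have "xs = rev (map g xs)"
    unfolding xs_def by (rule sorted_key_list_of_set_eqI[OF assms(1,2)])
  then show ?thesis unfolding xs_def[symmetric] by (metis rev_rev_ident)
qed

lemma lattice_point_on_line:
  fixes p q x y :: int
  assumes "coprime p q" "p \<noteq> 0" "q * y = p * x"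
  shows "\<exists>a. x = a * q \<and> y = a * p"
proof -
  have "p dvd q * y" using assms(3) by simp
  then obtain a where y: "y = a * p"
    using assms(1) by (metis coprime_commute coprime_dvd_mult_right_iff dvd_def mult.commute)
  then have "x = a * q" using assms(2,3) by (simp add: algebra_simps)
  with y show ?thesis by blast
qed

lemma int_multiples_around_0:
  fixes a n :: int
  assumes "0 < n" "a * n \<le> 0" "0 < (a + 1) * n"
  shows "a = 0"
proof -
  have "a \<le> 0" "0 < a + 1" using assms by (simp_all add: mult_le_0_iff zero_less_mult_iff)
  then show ?thesis by simp
qed

lemma int_multiple_in_range_eq_0:
  fixes a n :: int
  assumes "0 \<le> a * n" "a * n < n"
  shows "a = 0"
  using int_multiples_around_0[of n "- a"] assms by (simp add: algebra_simps)

lemma of_int_compare_fraction: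
  fixes \<delta> :: real
  assumes "0 < \<delta>" "\<delta> < 1"
  shows "of_int k < \<delta> \<longleftrightarrow> k \<le> 0" and "\<delta> < of_int k \<longleftrightarrow> 0 < k" and "\<delta> \<le> of_int k \<longleftrightarrow> 0 < k"
  using assms by linarith+

fun on_edge :: "edge \<Rightarrow> real \<Rightarrow> real \<Rightarrow> bool" where
  "on_edge (H i j) x y \<longleftrightarrow> y = of_int j \<and> of_int i < x \<and> x < of_int i + 1"
| "on_edge (V i j) x y \<longleftrightarrow> x = of_int i \<and> of_int j < y \<and> y < of_int j + 1"
| "on_edge (D i j) x y \<longleftrightarrow> x + y = of_int i + of_int j + 1 \<and> of_int i < x \<and> x < of_int i + 1"

lemma on_edge_iff_seg_pt:
  "on_edge e x y \<longleftrightarrow> (\<exists>u. 0 < u \<and> u < 1 \<and> (x, y) = seg_pt (edge_end1 e) (edge_end2 e) u)"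
proof (cases e)
  case (H i j)
  then show ?thesis by (auto simp: seg_pt_def intro!: exI[of _ "x - of_int i"])
next
  case (V i j)
  then show ?thesis by (auto simp: seg_pt_def intro!: exI[of _ "y - of_int j"])
next
  case (D i j)
  then show ?thesis by (auto simp: seg_pt_def algebra_simps intro!: exI[of _ "x - of_int i"])
qed

lemma on_edge_not_lattice_point: "\<not> on_edge e (of_int a) (of_int b)"
  by (cases e) auto

definition edge_at :: "real \<Rightarrow> real \<Rightarrow> edge" where
  "edge_at x y = (if x \<in> \<int> then V \<lfloor>x\<rfloor> \<lfloor>y\<rfloor> else if y \<in> \<int> then H \<lfloor>x\<rfloor> \<lfloor>y\<rfloor> else D \<lfloor>x\<rfloor> \<lfloor>y\<rfloor>)"

lemma floor_eq_not_Ints: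
  fixes x :: real
  assumes "of_int i < x" "x < of_int i + 1"
  shows "\<lfloor>x\<rfloor> = i \<and> x \<notin> \<int>"
  using assms by (auto simp: floor_eq_iff elim!: Ints_cases)

lemma on_edge_imp_edge_at: "on_edge e x y \<Longrightarrow> e = edge_at x y"
proof (induction e x y rule: on_edge.induct)
  case (3 i j x y)
  then have "of_int j < y" "y < of_int j + 1" by auto
  with 3 show ?case using floor_eq_not_Ints[of i x] floor_eq_not_Ints[of j y] by (auto simp: edge_at_def)
qed (auto simp: edge_at_def dest: floor_eq_not_Ints)

text \<open>The parameter \<open>s\<close> at which the segment \<open>s \<mapsto> (s q - \<epsilon>, s p)\<close> meets the line carrying
  an edge.\<close>

fun hit_time :: "int \<Rightarrow> int \<Rightarrow> real \<Rightarrow> edge \<Rightarrow> real" where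
  "hit_time p q \<epsilon> (H i j) = of_int j / of_int p"
| "hit_time p q \<epsilon> (V i j) = (of_int i + \<epsilon>) / of_int q"
| "hit_time p q \<epsilon> (D i j) = (of_int i + of_int j + 1 + \<epsilon>) / (of_int p + of_int q)"

text \<open>The values of \<open>q y - p x\<close> at the two endpoints of an edge, the smaller one first.\<close>

fun low_height :: "int \<Rightarrow> int \<Rightarrow> edge \<Rightarrow> int" where
  "low_height p q (H i j) = q * j - p * (i + 1)"
| "low_height p q (V i j) = q * j - p * i"
| "low_height p q (D i j) = q * j - p * (i + 1)"

fun high_height :: "int \<Rightarrow> int \<Rightarrow> edge \<Rightarrow> int" where
  "high_height p q (H i j) = q * j - p * i"
| "high_height p q (V i j) = q * (j + 1) - p * i"
| "high_height p q (D i j) = q * (j + 1) - p * i"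

fun hit_key :: "edge \<Rightarrow> int" where
  "hit_key (H i j) = j"
| "hit_key (V i j) = i"
| "hit_key (D i j) = i + j + 1"

fun hit_den :: "int \<Rightarrow> int \<Rightarrow> edge \<Rightarrow> int" where
  "hit_den p q (H i j) = p"
| "hit_den p q (V i j) = q"
| "hit_den p q (D i j) = p + q"

lemma hit_time_zero: "hit_time p q 0 e = of_int (hit_key e) / of_int (hit_den p q e)"
  by (cases e) simp_all

definition crosses_closed :: "int \<Rightarrow> int \<Rightarrow> edge \<Rightarrow> bool" where
  "crosses_closed p q e \<longleftrightarrow> 0 < hit_key e \<and> hit_key e < hit_den p q e \<and>
     low_height p q e < 0 \<and> 0 < high_height p q e"

definition crosses_shifted :: "int \<Rightarrow> int \<Rightarrow> edge \<Rightarrow> bool" where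
  "crosses_shifted p q e \<longleftrightarrow> 0 \<le> hit_key e \<and> hit_key e < hit_den p q e \<and>
     low_height p q e \<le> 0 \<and> 0 < high_height p q e"

text \<open>The half-turn \<open>(x, y) \<mapsto> (q - x, p - y)\<close> about the centre of \<open>L\<^sub>t\<close>.\<close>

fun rotate_edge :: "int \<Rightarrow> int \<Rightarrow> edge \<Rightarrow> edge" where
  "rotate_edge p q (H i j) = H (q - 1 - i) (p - j)"
| "rotate_edge p q (V i j) = V (q - i) (p - 1 - j)"
| "rotate_edge p q (D i j) = D (q - 1 - i) (p - 1 - j)"

lemma rotate_edge_involution [simp]: "rotate_edge p q (rotate_edge p q e) = e"
  by (cases e) simp_all

lemma edge_gen_rotate_edge [simp]: "edge_gen (rotate_edge p q e) = edge_gen e"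
  by (cases e) simp_all

lemma hit_key_rotate_edge [simp]: "hit_key (rotate_edge p q e) = hit_den p q e - hit_key e"
  by (cases e) simp_all

lemma hit_den_rotate_edge [simp]: "hit_den p q (rotate_edge p q e) = hit_den p q e"
  by (cases e) simp_all

lemma low_height_rotate_edge [simp]: "low_height p q (rotate_edge p q e) = - high_height p q e"
  by (cases e) (simp_all add: algebra_simps)

lemma high_height_rotate_edge [simp]: "high_height p q (rotate_edge p q e) = - low_height p q e"
  by (cases e) (simp_all add: algebra_simps)

lemma crosses_closed_rotate_edge [simp]: "crosses_closed p q (rotate_edge p q e) \<longleftrightarrow> crosses_closed p q e"
  by (auto simp: crosses_closed_def)

lemma edge_letter_shifted:
  "edge_letter (- \<epsilon>, 0) (of_int q - \<epsilon>, of_int p) e =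
     (edge_gen e, 2 * \<epsilon> * of_int p \<le> of_int (low_height p q e + high_height p q e))"
proof -
  have "2 * (of_int q * snd (midpoint2 e) - of_int p * fst (midpoint2 e)) =
      real_of_int (low_height p q e + high_height p q e)"
    by (cases e) (simp_all add: midpoint2_def field_simps)
  then show ?thesis unfolding edge_letter_def right_side_def by (auto simp: algebra_simps)
qed

lemma edge_letter_unshifted:
  "edge_letter (0, 0) (of_int q, of_int p) e = (edge_gen e, 0 \<le> low_height p q e + high_height p q e)"
  using edge_letter_shifted[of 0 q p e]
  by (simp only: minus_zero diff_zero mult_zero_right mult_zero_left of_int_0_le_iff)

definition crossing_list :: "real set \<Rightarrow> real \<times> real \<Rightarrow> real \<times> real \<Rightarrow> edge list" where
  "crossing_list S A B = sorted_key_list_of_set (cross_param S A B) (crossed S A B)"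

lemma read_word_crossing_list: "read_word S A B = map (edge_letter A B) (crossing_list S A B)"
  by (simp add: read_word_def crossing_list_def)

context
  fixes p q :: int
  assumes p_pos: "0 < p" and q_pos: "0 < q"
begin

lemma seg_pt_shifted: "seg_pt (- \<epsilon>, 0) (of_int q - \<epsilon>, of_int p) s = (s * of_int q - \<epsilon>, s * of_int p)"
  by (simp add: seg_pt_def algebra_simps)

lemma on_edge_shifted_line_imp_hit_time:
  "on_edge e (s * of_int q - \<epsilon>) (s * of_int p) \<Longrightarrow> s = hit_time p q \<epsilon> e"
  using p_pos q_pos by (cases e) (auto simp: field_simps)

lemma on_edge_at_hit_time_iff:
  "on_edge e (hit_time p q \<epsilon> e * of_int q - \<epsilon>) (hit_time p q \<epsilon> e * of_int p) \<longleftrightarrow>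
     of_int (low_height p q e) < \<epsilon> * of_int p \<and> \<epsilon> * of_int p < of_int (high_height p q e)"
    (is "on_edge e (?t * _ - _) _ \<longleftrightarrow> _")
proof -
  have pq: "real_of_int p > 0" "real_of_int q > 0" using p_pos q_pos by auto
  show ?thesis
  proof (cases e)
    case (D i j)
    have "?t * of_int q - \<epsilon> + ?t * of_int p = ?t * (of_int p + of_int q) - \<epsilon>"
      by (simp add: algebra_simps)
    also have "\<dots> = of_int i + of_int j + 1"
      using D pq by simp
    finally show ?thesis using D pq by (simp only: on_edge.simps) (auto simp: field_simps)
  qed (use pq in \<open>auto simp: field_simps\<close>)
qed

lemma meets_at_shifted_iff:
  "meets_at S (- \<epsilon>, 0) (of_int q - \<epsilon>, of_int p) e s \<longleftrightarrow>
     s \<in> S \<and> s = hit_time p q \<epsilon> e \<and>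
     of_int (low_height p q e) < \<epsilon> * of_int p \<and> \<epsilon> * of_int p < of_int (high_height p q e)"
  unfolding meets_at_def seg_pt_shifted on_edge_iff_seg_pt[symmetric]
  using on_edge_shifted_line_imp_hit_time on_edge_at_hit_time_iff by blast

lemma crossed_shifted:
  "crossed S (- \<epsilon>, 0) (of_int q - \<epsilon>, of_int p) =
     {e. hit_time p q \<epsilon> e \<in> S \<and>
         of_int (low_height p q e) < \<epsilon> * of_int p \<and> \<epsilon> * of_int p < of_int (high_height p q e)}"
  unfolding crossed_def meets_at_shifted_iff by auto

lemma cross_param_shifted:
  assumes "e \<in> crossed S (- \<epsilon>, 0) (of_int q - \<epsilon>, of_int p)"
  shows "cross_param S (- \<epsilon>, 0) (of_int q - \<epsilon>, of_int p) e = hit_time p q \<epsilon> e"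
  using assms unfolding cross_param_def crossed_def meets_at_shifted_iff by auto

lemma inj_on_cross_param_shifted:
  "inj_on (cross_param S (- \<epsilon>, 0) (of_int q - \<epsilon>, of_int p)) (crossed S (- \<epsilon>, 0) (of_int q - \<epsilon>, of_int p))"
proof (rule inj_onI)
  fix e e' assume e: "e \<in> crossed S (- \<epsilon>, 0) (of_int q - \<epsilon>, of_int p)"
    and e': "e' \<in> crossed S (- \<epsilon>, 0) (of_int q - \<epsilon>, of_int p)"
    and "cross_param S (- \<epsilon>, 0) (of_int q - \<epsilon>, of_int p) e = cross_param S (- \<epsilon>, 0) (of_int q - \<epsilon>, of_int p) e'"
  then have same_time: "hit_time p q \<epsilon> e = hit_time p q \<epsilon> e'"
    by (simp add: cross_param_shifted)
  have "on_edge e (hit_time p q \<epsilon> e * of_int q - \<epsilon>) (hit_time p q \<epsilon> e * of_int p)"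
    "on_edge e' (hit_time p q \<epsilon> e' * of_int q - \<epsilon>) (hit_time p q \<epsilon> e' * of_int p)"
    using e e' by (simp_all add: crossed_shifted on_edge_at_hit_time_iff)
  then show "e = e'" unfolding same_time by (metis on_edge_imp_edge_at)
qed

lemma crossed_unshifted:
  "crossed S (0, 0) (of_int q, of_int p) =
     {e. hit_time p q 0 e \<in> S \<and> low_height p q e < 0 \<and> 0 < high_height p q e}"
  using crossed_shifted[of S 0] by simp

lemma cross_param_unshifted:
  "e \<in> crossed S (0, 0) (of_int q, of_int p) \<Longrightarrow> cross_param S (0, 0) (of_int q, of_int p) e = hit_time p q 0 e"
  using cross_param_shifted[of e S 0] by simp

lemma inj_on_cross_param_unshifted:
  "inj_on (cross_param S (0, 0) (of_int q, of_int p)) (crossed S (0, 0) (of_int q, of_int p))"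
  using inj_on_cross_param_shifted[of S 0] by simp

lemma hit_time_in_half_open_iff:
  assumes "0 \<le> \<epsilon>" "\<epsilon> < 1"
  shows "hit_time p q \<epsilon> e \<in> {0..<1} \<longleftrightarrow> 0 \<le> hit_key e \<and> hit_key e < hit_den p q e"
  using assms p_pos q_pos by (cases e) (auto simp: field_simps)

lemma crossed_closed_eq: "crossed {0..1} (0, 0) (of_int q, of_int p) = {e. crosses_closed p q e}"
proof -
  have interior: "hit_time p q 0 e \<in> {0<..<1}"
    if "hit_time p q 0 e \<in> {0..1}" "low_height p q e < 0" "0 < high_height p q e" for e
  proof -
    have "on_edge e (hit_time p q 0 e * of_int q) (hit_time p q 0 e * of_int p)"
      using that on_edge_at_hit_time_iff[of e 0] by simp
    moreover have "\<not> on_edge e (0 * of_int q) (0 * of_int p)" "\<not> on_edge e (1 * of_int q) (1 * of_int p)"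
      using on_edge_not_lattice_point[of e 0 0] on_edge_not_lattice_point[of e q p] by simp_all
    ultimately show ?thesis
      using that(1) by (metis atLeastAtMost_iff greaterThanLessThan_iff order_le_less)
  qed
  have closed_to_open: "hit_time p q 0 e \<in> {0..1} \<and> low_height p q e < 0 \<and> 0 < high_height p q e \<longleftrightarrow>
      hit_time p q 0 e \<in> {0<..<1} \<and> low_height p q e < 0 \<and> 0 < high_height p q e" for e
    using interior[of e] by auto
  have open_iff: "hit_time p q 0 e \<in> {0<..<1} \<longleftrightarrow> 0 < hit_key e \<and> hit_key e < hit_den p q e" for e
    using p_pos q_pos by (cases e) (auto simp: hit_time_zero field_simps)
  show ?thesis unfolding crossed_unshifted crosses_closed_def
    by (simp only: closed_to_open open_iff conj_assoc)
qed

lemma crossed_half_open_eq: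
  assumes "0 < \<epsilon>" "\<epsilon> * of_int p < 1"
  shows "crossed {0..<1} (- \<epsilon>, 0) (of_int q - \<epsilon>, of_int p) = {e. crosses_shifted p q e}"
proof -
  have "\<epsilon> * 1 \<le> \<epsilon> * of_int p"
    using assms(1) p_pos by (intro mult_left_mono) auto
  then have "\<epsilon> < 1" using assms(2) by simp
  have "0 < \<epsilon> * of_int p" using assms(1) p_pos by simp
  show ?thesis
    unfolding crossed_shifted crosses_shifted_def
      hit_time_in_half_open_iff[OF less_imp_le[OF assms(1)] \<open>\<epsilon> < 1\<close>]
      of_int_compare_fraction[OF \<open>0 < \<epsilon> * of_int p\<close> assms(2)]
    by (simp only: conj_assoc)
qed

lemma crosses_shifted_key_zero:
  assumes "crosses_shifted p q e" "hit_key e = 0"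
  shows "e \<in> {H (-1) 0, D (-1) 0, V 0 0}"
proof (cases e)
  case (H i j)
  with assms have "(- i - 1) * p \<le> 0" "0 < (- i - 1 + 1) * p"
    by (auto simp: crosses_shifted_def algebra_simps)
  with H assms(2) show ?thesis using int_multiples_around_0[OF p_pos] by fastforce
next
  case (V i j)
  with assms have "j * q \<le> 0" "0 < (j + 1) * q"
    by (auto simp: crosses_shifted_def algebra_simps)
  with V assms(2) show ?thesis using int_multiples_around_0[OF q_pos] by fastforce
next
  case (D i j)
  with assms have "i = - j - 1" by simp
  with D assms have "j * (p + q) \<le> 0" "0 < (j + 1) * (p + q)"
    by (auto simp: crosses_shifted_def algebra_simps)
  with D \<open>i = - j - 1\<close> show ?thesis using int_multiples_around_0[of "p + q"] p_pos q_pos by fastforce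
qed

lemma crosses_shifted_low_zero:
  assumes "coprime p q" "crosses_shifted p q e" "low_height p q e = 0"
  shows "e \<in> {H (-1) 0, D (-1) 0, V 0 0}"
proof (cases e)
  case (H i j)
  with assms(3) obtain a where a: "i + 1 = a * q" "j = a * p"
    using lattice_point_on_line[OF assms(1)] p_pos by fastforce
  have "0 \<le> a * p" "a * p < p" using assms(2) H a by (simp_all add: crosses_shifted_def)
  then have "a = 0" by (rule int_multiple_in_range_eq_0)
  with H a show ?thesis by simp
next
  case (V i j)
  with assms(3) obtain a where a: "i = a * q" "j = a * p"
    using lattice_point_on_line[OF assms(1)] p_pos by fastforce
  have "0 \<le> a * q" "a * q < q" using assms(2) V a by (simp_all add: crosses_shifted_def)
  then have "a = 0" by (rule int_multiple_in_range_eq_0)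
  with V a show ?thesis by simp
next
  case (D i j)
  with assms(3) obtain a where a: "i + 1 = a * q" "j = a * p"
    using lattice_point_on_line[OF assms(1)] p_pos by fastforce
  then have "hit_key e = a * (p + q)" using D by (simp add: algebra_simps)
  then have "0 \<le> a * (p + q)" "a * (p + q) < p + q"
    using assms(2) D by (simp_all add: crosses_shifted_def)
  then have "a = 0" by (rule int_multiple_in_range_eq_0)
  with D a show ?thesis by simp
qed

lemma crosses_shifted_iff:
  assumes "coprime p q"
  shows "crosses_shifted p q e \<longleftrightarrow> crosses_closed p q e \<or> e \<in> {H (-1) 0, D (-1) 0, V 0 0}"
proof
  assume shifted: "crosses_shifted p q e"
  show "crosses_closed p q e \<or> e \<in> {H (-1) 0, D (-1) 0, V 0 0}"
  proof (cases "hit_key e = 0 \<or> low_height p q e = 0")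
    case True
    then show ?thesis using crosses_shifted_key_zero crosses_shifted_low_zero assms shifted by blast
  next
    case False
    then show ?thesis using shifted by (auto simp: crosses_shifted_def crosses_closed_def)
  qed
next
  assume "crosses_closed p q e \<or> e \<in> {H (-1) 0, D (-1) 0, V 0 0}"
  then show "crosses_shifted p q e"
    using p_pos q_pos by (auto simp: crosses_shifted_def crosses_closed_def)
qed

lemma hit_time_zero_scaled_Ints: "of_int (p * q * (p + q)) * hit_time p q 0 e \<in> \<int>"
proof -
  have "of_int (p * q * (p + q)) * hit_time p q 0 e =
      of_int (hit_key e * (p * q * (p + q) div hit_den p q e))"
    using p_pos q_pos by (cases e) (simp_all add: hit_time_zero)
  then show ?thesis by simp
qed

lemma hit_time_shift_bounds:
  assumes "0 \<le> \<epsilon>"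
  shows "hit_time p q 0 e \<le> hit_time p q \<epsilon> e" "hit_time p q \<epsilon> e \<le> hit_time p q 0 e + \<epsilon>"
proof -
  have "\<exists>c. hit_time p q \<epsilon> e = hit_time p q 0 e + \<epsilon> * c \<and> 0 \<le> c \<and> c \<le> 1"
  proof (cases e)
    case (H i j)
    then show ?thesis by (intro exI[of _ 0]) simp
  next
    case (V i j)
    then show ?thesis using q_pos
      by (intro exI[of _ "1 / of_int q"]) (simp add: add_divide_distrib)
  next
    case (D i j)
    then show ?thesis using p_pos q_pos
      by (intro exI[of _ "1 / (of_int p + of_int q)"]) (simp add: add_divide_distrib)
  qed
  then obtain c where "hit_time p q \<epsilon> e = hit_time p q 0 e + \<epsilon> * c" "0 \<le> c" "c \<le> 1"
    by blast
  moreover have "\<epsilon> * c \<le> \<epsilon> * 1" using assms \<open>c \<le> 1\<close> by (intro mult_left_mono)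
  ultimately show "hit_time p q 0 e \<le> hit_time p q \<epsilon> e" "hit_time p q \<epsilon> e \<le> hit_time p q 0 e + \<epsilon>"
    using assms by simp_all
qed

lemma hit_time_shift_strict_mono:
  assumes "0 \<le> \<epsilon>" "\<epsilon> * of_int (p * q * (p + q)) < 1" "hit_time p q 0 e < hit_time p q 0 e'"
  shows "hit_time p q \<epsilon> e < hit_time p q \<epsilon> e'"
proof -
  \<comment> \<open>Unshifted hit times are multiples of \<open>1 / M\<close>, and the shift moves each by at most \<open>\<epsilon> < 1 / M\<close>.\<close>
  define M where "M = real_of_int (p * q * (p + q))"
  have "0 < M" unfolding M_def using p_pos q_pos by simp
  obtain n n' where n: "M * hit_time p q 0 e = of_int n" and n': "M * hit_time p q 0 e' = of_int n'"
    using hit_time_zero_scaled_Ints[of e] hit_time_zero_scaled_Ints[of e'] unfolding M_def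
    by (metis Ints_cases)
  have "of_int n < (of_int n' :: real)"
    unfolding n[symmetric] n'[symmetric] using \<open>0 < M\<close> assms(3) by simp
  then have "n + 1 \<le> n'" by simp
  then have gap: "M * hit_time p q 0 e + 1 \<le> M * hit_time p q 0 e'"
    unfolding n n' using of_int_le_iff[of "n + 1" n'] by simp
  have "M * hit_time p q \<epsilon> e \<le> M * hit_time p q 0 e + \<epsilon> * M"
    using mult_left_mono[OF hit_time_shift_bounds(2)[OF assms(1), of e], of M] \<open>0 < M\<close>
    by (simp add: algebra_simps)
  also have "\<dots> < M * hit_time p q 0 e'"
    using gap assms(2) unfolding M_def by linarith
  also have "\<dots> \<le> M * hit_time p q \<epsilon> e'"
    using hit_time_shift_bounds(1)[OF assms(1), of e'] \<open>0 < M\<close> by simp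
  finally show ?thesis using \<open>0 < M\<close> by simp
qed

lemma hit_time_zero_rotate_edge: "hit_time p q 0 (rotate_edge p q e) = 1 - hit_time p q 0 e"
proof -
  have "hit_den p q e \<noteq> 0" using p_pos q_pos by (cases e) simp_all
  then show ?thesis by (simp add: hit_time_zero diff_divide_distrib)
qed

lemma edge_letter_shifted_small:
  assumes "0 < \<epsilon>" "2 * \<epsilon> * of_int p < 1"
  shows "edge_letter (- \<epsilon>, 0) (of_int q - \<epsilon>, of_int p) e = (edge_gen e, 0 < low_height p q e + high_height p q e)"
proof -
  have "0 < 2 * \<epsilon> * of_int p" using assms(1) p_pos by simp
  from of_int_compare_fraction(3)[OF this assms(2), of "low_height p q e + high_height p q e"]
  show ?thesis unfolding edge_letter_shifted by simp
qed

lemma inv_letter_rotate_edge: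
  assumes "0 < \<epsilon>" "2 * \<epsilon> * of_int p < 1"
  shows "inv_letter (edge_letter (0, 0) (of_int q, of_int p) (rotate_edge p q e)) =
    edge_letter (- \<epsilon>, 0) (of_int q - \<epsilon>, of_int p) e"
  unfolding edge_letter_unshifted edge_letter_shifted_small[OF assms] inv_letter_def by auto

lemma finite_crossed_unshifted: "finite (crossed {0..1} (0, 0) (of_int q, of_int p))"
proof -
  define C where "C = crossed {0..1} (0, 0) (of_int q, of_int p)"
  define M where "M = p * q * (p + q)"
  define g where "g e = of_int M * hit_time p q 0 e" for e
  have "M \<noteq> 0" unfolding M_def using p_pos q_pos by simp
  then have "inj_on g C"
    using inj_on_cross_param_unshifted unfolding C_def g_def inj_on_def
    by (simp add: cross_param_unshifted)
  moreover have "g ` C \<subseteq> of_int ` {0..M}"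
  proof
    fix x assume "x \<in> g ` C"
    then obtain e where e: "e \<in> C" "x = g e" by blast
    then obtain n where n: "x = of_int n" using hit_time_zero_scaled_Ints[of e]
      unfolding g_def M_def by (metis Ints_cases)
    have "0 \<le> hit_time p q 0 e" "hit_time p q 0 e \<le> 1" using e(1) by (simp_all add: C_def crossed_unshifted)
    moreover have "0 < M" unfolding M_def using p_pos q_pos by simp
    ultimately have "0 \<le> x" "x \<le> of_int M"
      unfolding e(2) g_def by (simp_all add: mult_left_le)
    then show "x \<in> of_int ` {0..M}" unfolding n by simp
  qed
  then have "finite (g ` C)" by (rule finite_subset) simp
  ultimately show ?thesis unfolding C_def[symmetric] by (rule finite_imageD[rotated])
qed

lemma rev_crossing_list_unshifted:
  "rev (crossing_list {0..1} (0, 0) (of_int q, of_int p)) =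
     map (rotate_edge p q) (crossing_list {0..1} (0, 0) (of_int q, of_int p))"
  unfolding crossing_list_def
proof (rule rev_sorted_key_list_of_set)
  show "finite (crossed {0..1} (0, 0) (of_int q, of_int p))" by (rule finite_crossed_unshifted)
  show "inj_on (cross_param {0..1} (0, 0) (of_int q, of_int p)) (crossed {0..1} (0, 0) (of_int q, of_int p))"
    by (rule inj_on_cross_param_unshifted)
  show "rotate_edge p q ` crossed {0..1} (0, 0) (of_int q, of_int p) = crossed {0..1} (0, 0) (of_int q, of_int p)"
    unfolding crossed_closed_eq by (auto intro: image_eqI[of _ "rotate_edge p q", OF rotate_edge_involution[symmetric]])
  fix e e' assume "e \<in> crossed {0..1} (0, 0) (of_int q, of_int p)" "e' \<in> crossed {0..1} (0, 0) (of_int q, of_int p)"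
    "cross_param {0..1} (0, 0) (of_int q, of_int p) e < cross_param {0..1} (0, 0) (of_int q, of_int p) e'"
  moreover from this have "rotate_edge p q e \<in> crossed {0..1} (0, 0) (of_int q, of_int p)"
    "rotate_edge p q e' \<in> crossed {0..1} (0, 0) (of_int q, of_int p)"
    by (simp_all add: crossed_closed_eq)
  ultimately show "cross_param {0..1} (0, 0) (of_int q, of_int p) (rotate_edge p q e') <
      cross_param {0..1} (0, 0) (of_int q, of_int p) (rotate_edge p q e)"
    by (simp add: cross_param_unshifted hit_time_zero_rotate_edge)
qed

lemma small_shift_bounds:
  fixes \<epsilon> :: real
  assumes "0 < \<epsilon>" "\<epsilon> * of_int (p * q * (p + q)) < 1"
  shows "2 * \<epsilon> * of_int p < 1" "\<epsilon> * of_int p < 1"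
proof -
  have "1 * 2 \<le> q * (p + q)" using p_pos q_pos by (intro mult_mono) auto
  then have "p * 2 \<le> p * (q * (p + q))" using p_pos by (intro mult_left_mono) auto
  then have "real_of_int (2 * p) \<le> of_int (p * q * (p + q))" by (simp only: of_int_le_iff ac_simps)
  then have "\<epsilon> * of_int (2 * p) \<le> \<epsilon> * of_int (p * q * (p + q))"
    using assms(1) by (intro mult_left_mono) auto
  then show "2 * \<epsilon> * of_int p < 1" using assms(2) by simp
  moreover have "0 \<le> \<epsilon> * of_int p" using assms(1) p_pos by simp
  ultimately show "\<epsilon> * of_int p < 1" by linarith
qed

lemma crossed_half_open_eq_union:
  assumes "coprime p q" "0 < \<epsilon>" "\<epsilon> * of_int (p * q * (p + q)) < 1"
  shows "crossed {0..<1} (- \<epsilon>, 0) (of_int q - \<epsilon>, of_int p) =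
    crossed {0..1} (0, 0) (of_int q, of_int p) \<union> {H (-1) 0, D (-1) 0, V 0 0}"
  unfolding crossed_closed_eq crossed_half_open_eq[OF assms(2) small_shift_bounds(2)[OF assms(2,3)]]
  using crosses_shifted_iff[OF assms(1)] by auto

lemma set_crossing_list_unshifted:
  "set (crossing_list {0..1} (0, 0) (of_int q, of_int p)) = crossed {0..1} (0, 0) (of_int q, of_int p)"
  unfolding crossing_list_def
  by (rule set_sorted_key_list_of_set_inj[OF finite_crossed_unshifted inj_on_cross_param_unshifted])

lemma sorted_hit_times_shifted:
  assumes "0 < \<epsilon>" "\<epsilon> * of_int (p * q * (p + q)) < 1"
  shows "sorted_wrt (<)
    (map (hit_time p q \<epsilon>) ([H (-1) 0, D (-1) 0, V 0 0] @ crossing_list {0..1} (0, 0) (of_int q, of_int p)))"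
proof -
  define xs where "xs = crossing_list {0..1} (0, 0) (of_int q, of_int p)"
  have "map (cross_param {0..1} (0, 0) (of_int q, of_int p)) xs = map (hit_time p q 0) xs"
    unfolding xs_def by (intro map_cong) (simp_all add: set_crossing_list_unshifted cross_param_unshifted)
  then have sorted0: "sorted_wrt (<) (map (hit_time p q 0) xs)"
    using sorted_wrt_sorted_key_list_of_set[OF inj_on_cross_param_unshifted]
    unfolding xs_def crossing_list_def by metis
  have pos: "0 < hit_time p q 0 e" if "e \<in> set xs" for e
    using that p_pos q_pos unfolding xs_def set_crossing_list_unshifted crossed_closed_eq
    by (auto simp: crosses_closed_def hit_time_zero)
  have shift_mono: "hit_time p q \<epsilon> e < hit_time p q \<epsilon> e'"
    if "hit_time p q 0 e < hit_time p q 0 e'" for e e'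
    using hit_time_shift_strict_mono[OF _ assms(2) that] assms(1) by simp
  have "sorted_wrt (\<lambda>e e'. hit_time p q \<epsilon> e < hit_time p q \<epsilon> e') [H (-1) 0, D (-1) 0, V 0 0]"
    using assms(1) p_pos q_pos by (simp add: frac_less2)
  moreover have "sorted_wrt (\<lambda>e e'. hit_time p q \<epsilon> e < hit_time p q \<epsilon> e') xs"
    using sorted0 shift_mono by (auto simp: sorted_wrt_map elim!: sorted_wrt_mono_rel[rotated])
  moreover have "\<forall>e \<in> set [H (-1) 0, D (-1) 0, V 0 0]. \<forall>e' \<in> set xs. hit_time p q \<epsilon> e < hit_time p q \<epsilon> e'"
  proof (intro ballI shift_mono)
    fix e e' assume "e \<in> set [H (-1) 0, D (-1) 0, V 0 0]" "e' \<in> set xs"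
    then show "hit_time p q 0 e < hit_time p q 0 e'" using pos[of e'] by auto
  qed
  ultimately show ?thesis unfolding xs_def[symmetric] sorted_wrt_map sorted_wrt_append by blast
qed

lemma crossing_list_shifted:
  assumes "coprime p q" "0 < \<epsilon>" "\<epsilon> * of_int (p * q * (p + q)) < 1"
  shows "crossing_list {0..<1} (- \<epsilon>, 0) (of_int q - \<epsilon>, of_int p) =
    [H (-1) 0, D (-1) 0, V 0 0] @ crossing_list {0..1} (0, 0) (of_int q, of_int p)"
    (is "_ = ?ys")
proof -
  have set_ys: "set ?ys = crossed {0..<1} (- \<epsilon>, 0) (of_int q - \<epsilon>, of_int p)"
    unfolding crossed_half_open_eq_union[OF assms] set_append set_crossing_list_unshifted by auto
  then have map_eq: "map (cross_param {0..<1} (- \<epsilon>, 0) (of_int q - \<epsilon>, of_int p)) ?ys = map (hit_time p q \<epsilon>) ?ys"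
    by (intro map_cong) (simp_all add: cross_param_shifted)
  have "sorted_wrt (<) (map (cross_param {0..<1} (- \<epsilon>, 0) (of_int q - \<epsilon>, of_int p)) ?ys)"
    unfolding map_eq by (rule sorted_hit_times_shifted[OF assms(2,3)])
  moreover have "finite (crossed {0..<1} (- \<epsilon>, 0) (of_int q - \<epsilon>, of_int p))"
    unfolding crossed_half_open_eq_union[OF assms] using finite_crossed_unshifted by simp
  ultimately show ?thesis
    unfolding crossing_list_def[of "{0..<1}"] using set_ys
    by (intro sorted_key_list_of_set_eqI inj_on_cross_param_shifted)
qed

lemma read_word_shifted_eq:
  assumes "coprime p q" "0 < \<epsilon>" "\<epsilon> * of_int (p * q * (p + q)) < 1"
  shows "read_word {0..<1} (- \<epsilon>, 0) (of_int q - \<epsilon>, of_int p) =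
    [(GX, True), (GY, True), (GZ, True)] @ word_inv (read_word {0..1} (0, 0) (of_int q, of_int p))"
proof -
  define xs where "xs = crossing_list {0..1} (0, 0) (of_int q, of_int p)"
  have small: "2 * \<epsilon> * of_int p < 1" by (rule small_shift_bounds(1)[OF assms(2,3)])
  have "word_inv (map (edge_letter (0, 0) (of_int q, of_int p)) xs) =
      map (inv_letter \<circ> edge_letter (0, 0) (of_int q, of_int p)) (rev xs)"
    by (simp add: word_inv_def rev_map)
  also have "\<dots> = map (edge_letter (- \<epsilon>, 0) (of_int q - \<epsilon>, of_int p)) xs"
    unfolding xs_def rev_crossing_list_unshifted by (simp add: inv_letter_rotate_edge[OF assms(2) small])
  finally have "word_inv (read_word {0..1} (0, 0) (of_int q, of_int p)) =
      map (edge_letter (- \<epsilon>, 0) (of_int q - \<epsilon>, of_int p)) xs"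
    unfolding read_word_crossing_list xs_def .
  moreover have "map (edge_letter (- \<epsilon>, 0) (of_int q - \<epsilon>, of_int p)) [H (-1) 0, D (-1) 0, V 0 0] =
      [(GX, True), (GY, True), (GZ, True)]"
    using p_pos q_pos by (simp add: edge_letter_shifted_small[OF assms(2) small])
  ultimately show ?thesis
    unfolding read_word_crossing_list crossing_list_shifted[OF assms] xs_def by simp
qed

end

theorem lemma5p4:
  fixes t :: rat
  assumes "0 < t"
  shows "\<exists>\<epsilon>0 > 0. \<forall>\<epsilon>. 0 < \<epsilon> \<and> \<epsilon> < \<epsilon>0 \<longrightarrow>
           fg_eq (omega_bar_eps t \<epsilon>)
                 ([(GX, True), (GY, True), (GZ, True)] @ word_inv (omega t))"
proof -
  obtain p q where pq: "quotient_of t = (p, q)" by (cases "quotient_of t")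
  have q_pos: "0 < q" and "coprime p q"
    using quotient_of_denom_pos[OF pq] quotient_of_coprime[OF pq] by simp_all
  have "0 < p"
    using assms quotient_of_div[OF pq] q_pos by (simp add: zero_less_divide_iff)
  define M where "M = real_of_int (p * q * (p + q))"
  have "0 < M" unfolding M_def using \<open>0 < p\<close> q_pos by simp
  show ?thesis
  proof (intro exI[of _ "1 / M"] conjI allI impI)
    show "0 < 1 / M" using \<open>0 < M\<close> by simp
    fix \<epsilon> :: real assume "0 < \<epsilon> \<and> \<epsilon> < 1 / M"
    then have "0 < \<epsilon>" "\<epsilon> * M < 1" using \<open>0 < M\<close> by (auto simp: less_divide_eq)
    then have "omega_bar_eps t \<epsilon> = [(GX, True), (GY, True), (GZ, True)] @ word_inv (omega t)"
      unfolding omega_bar_eps_def omega_def pq M_def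
      using read_word_shifted_eq[OF \<open>0 < p\<close> q_pos \<open>coprime p q\<close>] by simp
    then show "fg_eq (omega_bar_eps t \<epsilon>) ([(GX, True), (GY, True), (GZ, True)] @ word_inv (omega t))"
      by (simp add: fg_eq_def)
  qed
qed

end
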